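(* Let $\mathcal X=\min\{\mathfrak g_{sr},\mathfrak g_{sd}\}$ and $\bar C_{s_1,\mathrm{MRC}}:=\tfrac12\mathbb E[\log_2(1+\rho\mathcal X)-\log_2(1+a_2\rho\mathcal X)]$. Then, with $\Phi=\frac{m_{sr}}{\Omega_{sr}}+\frac{m_{sd}}{\Omega_{sd}}$, $$\bar C_{s_1,\mathrm{MRC}}=\frac{1}{2\ln2}\sum_{\mu=0}^{m_{sr}N_r-1}\sum_{\nu=0}^{m_{sd}N_d-1}\frac{m_{sr}^{\mu}m_{sd}^{\nu}\,\Gamma(\mu+\nu+1)}{\Omega_{sr}^{\mu}\Omega_{sd}^{\nu}\,\mu!\,\nu!\,\rho^{\mu+\nu}}\Big\{e^{\Phi/\rho}\,\Gamma\Big[-\mu-\nu,\tfrac{\Phi}{\rho}\Big]-\frac{1}{a_2^{\mu+\nu}}e^{\Phi/(\rho a_2)}\,\Gamma\Big[-\mu-\nu,\tfrac{\Phi}{\rho a_2}\Big]\Big\}.$$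
   Context: Let $N_r,N_d$ be positive integers, $m_{sr},m_{sd},m_{rd}$ positive integers, and $\Omega_{sr},\Omega_{sd},\Omega_{rd}>0$. Let $\{G_{sr,i}\}_{i=1}^{N_r}$, $\{G_{sd,j}\}_{j=1}^{N_d}$, $\{G_{rd,k}\}_{k=1}^{N_d}$ be mutually independent random variables, where each $G_{sr,i}$ has the Gamma density $f(x)=\frac{(m_{sr}/\Omega_{sr})^{m_{sr}}x^{m_{sr}-1}}{\Gamma(m_{sr})}e^{-m_{sr}x/\Omega_{sr}}$, $x>0$, and analogously $G_{sd,j}$ with parameters $(m_{sd},\Omega_{sd})$ and $G_{rd,k}$ with $(m_{rd},\Omega_{rd})$. Maximal-ratio combining (MRC) gains: $\mathfrak g_{sr}=\sum_{i=1}^{N_r}G_{sr,i}$, $\mathfrak g_{sd}=\sum_{j=1}^{N_d}G_{sd,j}$, $\mathfrak g_{rd}=\sum_{k=1}^{N_d}G_{rd,k}$. Let $\rho>0$ and $a_1,a_2\in(0,1)$ with $a_1+a_2=1$, $a_1>a_2$. $\Gamma[s,z]=\int_z^\infty t^{s-1}e^{-t}\,dt$ ($z>0$) is the upper incomplete Gamma function. *)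

theory Defs
  imports "HOL-Probability.Probability"
begin

text \<open>Index type for the independent channel gains: SR i (i < N_r), SD j, RD k (j,k < N_d).\<close>
datatype gidx = SR nat | SD nat | RD nat

text \<open>Gamma (Nakagami-m power) density with shape m and mean Omega.\<close>
definition gamma_pdf :: "real \<Rightarrow> real \<Rightarrow> real \<Rightarrow> real" where
  "gamma_pdf m \<Omega> x =
     (if x > 0 then (m / \<Omega>) powr m * x powr (m - 1) / Gamma m * exp (- m * x / \<Omega>) else 0)"

definition upper_Gamma :: "real \<Rightarrow> real \<Rightarrow> real" where
  "upper_Gamma s z = (\<integral>t\<in>{z<..}. t powr (s - 1) * exp (- t) \<partial>lborel)"

end

theory Submission
  imports Defs
begin

text \<open>
  A sum of \<open>N\<close> independent Gamma variables of integer shape \<open>m\<close> and mean \<open>\<Omega>\<close> is Erlang of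
  shape \<open>m N\<close> and rate \<open>m / \<Omega>\<close>, so by independence the survival function of
  \<open>X = min g\<^sub>s\<^sub>r g\<^sub>s\<^sub>d\<close> is \<open>e\<^sup>-\<^sup>\<Phi>\<^sup>t\<close> times a polynomial in \<open>t\<close>.
  The layer-cake formula gives \<open>E[ln (1 + c X)] = \<integral>\<^sub>0\<^sup>\<infinity> c / (1 + c t) P(X > t) dt\<close>, which
  reduces the claim to the integrals \<open>K\<^sub>n = \<integral>\<^sub>0\<^sup>\<infinity> c t\<^sup>n e\<^sup>-\<^sup>\<Phi>\<^sup>t / (1 + c t) dt\<close>.
  These satisfy \<open>c K\<^sub>n\<^sub>+\<^sub>1 + K\<^sub>n = c n! / \<Phi>\<^sup>n\<^sup>+\<^sup>1\<close>, the same recurrence as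
  \<open>\<Gamma>[-n, z] + (n + 1) \<Gamma>[-n-1, z] = e\<^sup>-\<^sup>z / z\<^sup>n\<^sup>+\<^sup>1\<close> (integration by parts), and the substitution
  \<open>t \<mapsto> \<Phi>/c + \<Phi> t\<close> settles \<open>n = 0\<close>; hence \<open>K\<^sub>n = n! / c\<^sup>n e\<^sup>\<Phi>\<^sup>/\<^sup>c \<Gamma>[-n, \<Phi>/c]\<close>.
\<close>

lemma nn_integral_power_exp:
  fixes \<Phi> :: real
  assumes "0 < \<Phi>"
  shows "(\<integral>\<^sup>+t. ennreal (t^n * exp (-\<Phi>*t) * indicator {0<..} t) \<partial>lborel) = ennreal (fact n / \<Phi>^(n+1))"
proof -
  have "(\<integral>\<^sup>+t. ennreal (erlang_density 0 \<Phi> t * t^n) \<partial>lborel)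
     = (\<integral>\<^sup>+t. ennreal \<Phi> * ennreal (t^n * exp (-\<Phi>*t) * indicator {0<..} t) \<partial>lborel)"
    using AE_lborel_singleton[of 0] by (intro nn_integral_cong_AE, eventually_elim)
       (use assms in \<open>auto simp: erlang_density_def ennreal_mult[symmetric] split: split_indicator\<close>)
  also have "\<dots> = ennreal \<Phi> * (\<integral>\<^sup>+t. ennreal (t^n * exp (-\<Phi>*t) * indicator {0<..} t) \<partial>lborel)"
    by (rule nn_integral_cmult) measurable
  finally have "ennreal \<Phi> * (\<integral>\<^sup>+t. ennreal (t^n * exp (-\<Phi>*t) * indicator {0<..} t) \<partial>lborel)
      = ennreal \<Phi> * ennreal (fact n / \<Phi>^(n+1))"
    using nn_integral_erlang_ith_moment[OF assms, of 0 n] assms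
    by (simp add: ennreal_mult[symmetric] field_simps)
  then show ?thesis
    using assms by (subst (asm) ennreal_mult_cancel_left) auto
qed

lemma has_bochner_integral_power_exp:
  fixes \<Phi> :: real
  assumes "0 < \<Phi>"
  shows "has_bochner_integral lborel (\<lambda>t. t^n * exp (-\<Phi>*t) * indicator {0<..} t) (fact n / \<Phi>^(n+1))"
  using nn_integral_power_exp[OF assms] assms
  by (intro has_bochner_integral_nn_integral) (auto split: split_indicator)

text \<open>\<open>t\<^sup>n e\<^sup>-\<^sup>\<Phi>\<^sup>t\<close> weighted by the derivative \<open>c / (1 + c t)\<close> of \<open>ln (1 + c t)\<close>.\<close>
definition log_moment_kernel :: "real \<Rightarrow> real \<Rightarrow> nat \<Rightarrow> real \<Rightarrow> real" where
  "log_moment_kernel \<Phi> c n t = c * t^n * exp (-\<Phi>*t) / (1 + c*t) * indicator {0<..} t"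

lemma log_moment_kernel_measurable [measurable]:
  "log_moment_kernel \<Phi> c n \<in> borel_measurable borel"
  unfolding log_moment_kernel_def by measurable

lemma integrable_log_moment_kernel:
  assumes "0 < c" "0 < \<Phi>"
  shows "integrable lborel (log_moment_kernel \<Phi> c n)"
proof (rule Bochner_Integration.integrable_bound)
  show "integrable lborel (\<lambda>t. c * (t^n * exp (-\<Phi>*t) * indicator {0<..} t))"
    using integrable.intros[OF has_bochner_integral_power_exp[OF assms(2)]]
    by (rule integrable_mult_right)
  have "c * t^n * exp (-\<Phi>*t) / (1 + c*t) \<le> c * t^n * exp (-\<Phi>*t) / 1" if "0 < t" for t
    using assms that by (intro divide_left_mono) (auto intro!: mult_nonneg_nonneg add_pos_pos)
  then show "AE t in lborel. norm (log_moment_kernel \<Phi> c n t)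
      \<le> norm (c * (t^n * exp (-\<Phi>*t) * indicator {0<..} t))"
    using assms by (intro AE_I2) (auto simp: log_moment_kernel_def abs_mult mult.assoc split: split_indicator)
qed simp

lemma log_moment_kernel_Suc:
  assumes "0 < c"
  shows "c * log_moment_kernel \<Phi> c (Suc n) t + log_moment_kernel \<Phi> c n t
       = c * (t^n * exp (-\<Phi>*t) * indicator {0<..} t)"
proof (cases "0 < t")
  case True
  then have "1 + c*t \<noteq> 0" using assms by (smt (verit) mult_pos_pos)
  moreover have "c * (c * t^Suc n * E / (1 + c*t)) + c * t^n * E / (1 + c*t)
      = c * t^n * E * (1 + c*t) / (1 + c*t)" for E
    by (simp add: add_divide_distrib algebra_simps)
  ultimately show ?thesis using True by (simp add: log_moment_kernel_def)
qed (simp add: log_moment_kernel_def)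

lemma integral_log_moment_kernel_Suc:
  assumes "0 < c" "0 < \<Phi>"
  shows "c * integral\<^sup>L lborel (log_moment_kernel \<Phi> c (Suc n))
       + integral\<^sup>L lborel (log_moment_kernel \<Phi> c n) = c * fact n / \<Phi>^(n+1)"
proof -
  have "c * integral\<^sup>L lborel (log_moment_kernel \<Phi> c (Suc n)) + integral\<^sup>L lborel (log_moment_kernel \<Phi> c n)
      = (\<integral>t. c * log_moment_kernel \<Phi> c (Suc n) t + log_moment_kernel \<Phi> c n t \<partial>lborel)"
    using integrable_log_moment_kernel[OF assms] by simp
  also have "\<dots> = (\<integral>t. c * (t^n * exp (-\<Phi>*t) * indicator {0<..} t) \<partial>lborel)"
    by (simp only: log_moment_kernel_Suc[OF assms(1)])
  also have "\<dots> = c * fact n / \<Phi>^(n+1)"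
    using has_bochner_integral_integral_eq[OF has_bochner_integral_power_exp[OF assms(2)]] by simp
  finally show ?thesis .
qed

lemma has_bochner_integral_upper_Gamma:
  assumes "0 < z" "s \<le> 1"
  shows "has_bochner_integral lborel (\<lambda>t. indicator {z<..} t *\<^sub>R (t powr (s - 1) * exp (-t))) (upper_Gamma s z)"
proof -
  have "integrable lborel (\<lambda>t. indicator {z<..} t *\<^sub>R (t powr (s - 1) * exp (-t)))"
  proof (rule Bochner_Integration.integrable_bound)
    show "integrable lborel (\<lambda>t. z powr (s - 1) * (t^0 * exp (-1*t) * indicator {0<..} t))"
      using integrable.intros[OF has_bochner_integral_power_exp[of 1 0]]
      by (intro integrable_mult_right) simp
    have "t powr (s - 1) \<le> z powr (s - 1)" if "z < t" for t
      using assms that by (intro powr_mono2') auto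
    then show "AE t in lborel. norm (indicator {z<..} t *\<^sub>R (t powr (s - 1) * exp (-t)))
        \<le> norm (z powr (s - 1) * (t^0 * exp (-1*t) * indicator {0<..} t))"
      using assms by (intro AE_I2) (auto simp: abs_mult split: split_indicator)
  qed measurable
  then show ?thesis
    by (simp add: has_bochner_integral_iff upper_Gamma_def set_lebesgue_integral_def)
qed

text \<open>\<open>f\<close> is the derivative of \<open>-t\<^sup>r e\<^sup>-\<^sup>t\<close>, which vanishes at infinity.\<close>
lemma has_bochner_integral_powr_exp_deriv:
  fixes r z :: real
  assumes z: "0 < z" and r: "r < 0"
  defines "f \<equiv> \<lambda>t. t powr r * exp (-t) - r * t powr (r - 1) * exp (-t)"
  shows "has_bochner_integral lborel (\<lambda>t. f t * indicator {z..} t) (z powr r * exp (-z))"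
proof (rule has_bochner_integral_nn_integral)
  define F where "F t = -(t powr r * exp (-t))" for t
  have fm [measurable]: "f \<in> borel_measurable borel" unfolding f_def by measurable
  then show "(\<lambda>t. f t * indicator {z..} t) \<in> borel_measurable lborel" by measurable
  have D: "DERIV F t :> f t" if "z \<le> t" for t
    using that z unfolding F_def f_def
    by (auto intro!: derivative_eq_intros simp: algebra_simps)
  have fnn: "0 \<le> f t" for t
  proof -
    have "r * t powr (r - 1) \<le> 0" using r by (simp add: mult_nonpos_nonneg)
    then have "0 \<le> t powr r - r * t powr (r - 1)"
      using powr_ge_zero[of t r] by linarith
    then have "0 \<le> (t powr r - r * t powr (r - 1)) * exp (-t)" by simp
    then show ?thesis by (simp add: f_def algebra_simps)
  qed
  then show "AE t in lborel. 0 \<le> f t * indicator {z..} t"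
    by (simp split: split_indicator)
  have "((\<lambda>t. t powr r * exp (-t)) \<longlongrightarrow> 0) at_top"
    by (intro tendsto_mult_zero tendsto_neg_powr[OF r filterlim_ident]
        filterlim_compose[OF exp_at_bot filterlim_uminus_at_bot_at_top])
  then have lim: "(F \<longlongrightarrow> 0) at_top"
    unfolding F_def using tendsto_minus by fastforce
  have "(\<integral>\<^sup>+t. ennreal (f t * indicator {z..} t) \<partial>lborel) = (\<integral>\<^sup>+t. ennreal (f t) * indicator {z..} t \<partial>lborel)"
    by (intro nn_integral_cong) (simp split: split_indicator)
  also have "\<dots> = ennreal (0 - F z)"
    by (rule nn_integral_FTC_atLeast[OF fm D fnn lim])
  finally show "(\<integral>\<^sup>+t. ennreal (f t * indicator {z..} t) \<partial>lborel) = ennreal (z powr r * exp (-z))"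
    by (simp add: F_def)
qed auto

lemma upper_Gamma_neg_nat_Suc:
  assumes z: "0 < z"
  shows "upper_Gamma (- real n) z + (real n + 1) * upper_Gamma (- real (Suc n)) z = exp (-z) / z ^ Suc n"
proof -
  define r where "r = - real n - 1"
  let ?g = "\<lambda>s t. indicator {z<..} t *\<^sub>R (t powr (s - 1) * exp (-t))"
  let ?f = "\<lambda>t. (t powr r * exp (-t) - r * t powr (r - 1) * exp (-t)) * indicator {z..} t"
  have "has_bochner_integral lborel (\<lambda>t. ?g (- real n) t + (real n + 1) * ?g (- real (Suc n)) t)
      (upper_Gamma (- real n) z + (real n + 1) * upper_Gamma (- real (Suc n)) z)"
    using z by (intro has_bochner_integral_add has_bochner_integral_mult_right
        has_bochner_integral_upper_Gamma) auto
  moreover have "AE t in lborel. ?g (- real n) t + (real n + 1) * ?g (- real (Suc n)) t = ?f t"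
    using AE_lborel_singleton[of z]
    by eventually_elim (auto simp: r_def algebra_simps split: split_indicator)
  ultimately have "has_bochner_integral lborel ?f
      (upper_Gamma (- real n) z + (real n + 1) * upper_Gamma (- real (Suc n)) z)"
    by (subst (asm) has_bochner_integral_cong_AE) auto
  moreover have "has_bochner_integral lborel ?f (z powr r * exp (-z))"
    by (rule has_bochner_integral_powr_exp_deriv[OF z]) (simp add: r_def)
  moreover have "z powr r = 1 / z ^ Suc n"
  proof -
    have "r = - real (Suc n)" by (simp add: r_def)
    then show ?thesis by (simp only: powr_minus powr_realpow[OF z]) (simp add: divide_inverse)
  qed
  ultimately show ?thesis
    by (auto dest: has_bochner_integral_eq)
qed

lemma integral_log_moment_kernel_0:
  assumes c: "0 < c" and \<Phi>: "0 < \<Phi>"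
  shows "integral\<^sup>L lborel (log_moment_kernel \<Phi> c 0) = exp (\<Phi>/c) * upper_Gamma 0 (\<Phi>/c)"
proof -
  define z where "z = \<Phi>/c"
  have z: "0 < z" unfolding z_def using c \<Phi> by simp
  define g where "g t = indicator {z<..} t *\<^sub>R (t powr (0 - 1) * exp (-t))" for t :: real
  have "upper_Gamma 0 z = integral\<^sup>L lborel g"
    unfolding g_def
    by (rule has_bochner_integral_integral_eq[OF has_bochner_integral_upper_Gamma[OF z], symmetric]) simp
  also have "\<dots> = \<bar>\<Phi>\<bar> *\<^sub>R (\<integral>x. g (z + \<Phi> * x) \<partial>lborel)"
    by (rule lborel_integral_real_affine) (use \<Phi> in simp)
  also have "\<dots> = (\<integral>x. exp (-z) * log_moment_kernel \<Phi> c 0 x \<partial>lborel)"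
    unfolding real_scaleR_def abs_of_pos[OF \<Phi>] integral_mult_right_zero[symmetric]
  proof (intro Bochner_Integration.integral_cong refl)
    fix x :: real
    show "\<Phi> * g (z + \<Phi> * x) = exp (-z) * log_moment_kernel \<Phi> c 0 x"
    proof (cases "0 < x")
      case True
      have pos: "0 < z + \<Phi> * x" "0 < 1 + c * x"
        using z \<Phi> c True by (simp_all add: add_pos_pos)
      have "\<Phi> * g (z + \<Phi> * x) = \<Phi> / (z + \<Phi> * x) * exp (-z) * exp (-\<Phi>*x)"
        unfolding g_def using True \<Phi> pos
        by (simp add: powr_neg_one exp_add[symmetric] exp_diff exp_minus field_simps)
      also have "\<Phi> / (z + \<Phi> * x) = c / (1 + c * x)"
        using c \<Phi> pos unfolding z_def by (simp add: field_simps)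
      finally show ?thesis using True by (simp add: log_moment_kernel_def)
    next
      case False
      then have "\<not> z < z + \<Phi> * x" using \<Phi> by (simp add: zero_less_mult_iff)
      then show ?thesis using False by (simp add: g_def log_moment_kernel_def)
    qed
  qed
  also have "\<dots> = exp (-z) * integral\<^sup>L lborel (log_moment_kernel \<Phi> c 0)"
    by (rule integral_mult_right_zero)
  finally show ?thesis
    unfolding z_def[symmetric] by (simp add: exp_minus field_simps)
qed

lemma has_bochner_integral_log_moment_kernel:
  assumes c: "0 < c" and \<Phi>: "0 < \<Phi>"
  shows "has_bochner_integral lborel (log_moment_kernel \<Phi> c n)
           (fact n / c^n * exp (\<Phi>/c) * upper_Gamma (- real n) (\<Phi>/c))"
proof -
  define z where "z = \<Phi>/c"
  have z: "0 < z" unfolding z_def using c \<Phi> by simp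
  let ?I = "\<lambda>n. integral\<^sup>L lborel (log_moment_kernel \<Phi> c n)"
  let ?U = "\<lambda>n. upper_Gamma (- real n) z"
  have "?I n = fact n / c^n * exp z * ?U n"
  proof (induction n)
    case 0
    then show ?case using integral_log_moment_kernel_0[OF c \<Phi>] by (simp add: z_def)
  next
    case (Suc n)
    have U: "(real n + 1) * ?U (Suc n) = exp (-z) / z ^ Suc n - ?U n"
      using upper_Gamma_neg_nat_Suc[OF z, of n] by linarith
    have "fact (Suc n) / c ^ Suc n * exp z * ?U (Suc n)
        = fact n / c ^ Suc n * exp z * ((real n + 1) * ?U (Suc n))"
      by (simp add: field_simps)
    also have "\<dots> = fact n / c ^ Suc n * (exp z * exp (-z) / z ^ Suc n - exp z * ?U n)"
      unfolding U by (simp add: field_simps)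
    also have "\<dots> = fact n / (c * z) ^ Suc n - fact n / c ^ Suc n * exp z * ?U n"
      using c z by (simp add: exp_minus power_mult_distrib field_simps)
    also have "\<dots> = ?I (Suc n)"
      using integral_log_moment_kernel_Suc[OF c \<Phi>, of n] Suc.IH c
      unfolding z_def by (simp add: field_simps)
    finally show ?case ..
  qed
  then show ?thesis
    using integrable_log_moment_kernel[OF c \<Phi>] by (simp add: has_bochner_integral_iff z_def)
qed

lemma gamma_pdf_eq_erlang_density:
  assumes m: "0 < m" and "0 < \<Omega>" and "x \<noteq> 0"
  shows "gamma_pdf (real m) \<Omega> x = erlang_density (m - 1) (real m / \<Omega>) x"
proof (cases "0 < x")
  case True
  have "Gamma (real m) = fact (m - 1)"
    using Gamma_fact[of "m - 1", where 'a=real] m by (simp add: of_nat_diff)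
  moreover have "(real m / \<Omega>) powr real m = (real m / \<Omega>) ^ Suc (m - 1)"
    using assms by (simp add: powr_realpow)
  moreover have "x powr (real m - 1) = x ^ (m - 1)"
    using True m by (simp add: powr_realpow[symmetric] of_nat_diff)
  ultimately show ?thesis
    using True by (simp add: gamma_pdf_def erlang_density_def mult_ac)
qed (use assms in \<open>simp add: gamma_pdf_def erlang_density_def\<close>)

lemma (in prob_space) distributed_gamma_pdf_erlang:
  assumes "0 < m" "0 < \<Omega>"
    and "distributed M lborel X (\<lambda>x. ennreal (gamma_pdf (real m) \<Omega> x))"
  shows "distributed M lborel X (erlang_density (m - 1) (real m / \<Omega>))"
proof -
  have "AE x in lborel. ennreal (gamma_pdf (real m) \<Omega> x) = ennreal (erlang_density (m - 1) (real m / \<Omega>) x)"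
    using AE_lborel_singleton[of 0] by eventually_elim (simp add: gamma_pdf_eq_erlang_density assms)
  then show ?thesis
    using assms(3) by (subst (asm) distributed_cong_density) (auto simp: gamma_pdf_def)
qed

lemma (in prob_space) distributed_sum_gamma_pdf:
  assumes "indep_vars (\<lambda>_. borel) X A" "finite A" "A \<noteq> {}" "0 < m" "0 < \<Omega>"
    and "\<And>i. i \<in> A \<Longrightarrow> distributed M lborel (X i) (\<lambda>x. ennreal (gamma_pdf (real m) \<Omega> x))"
  shows "distributed M lborel (\<lambda>\<omega>. \<Sum>i\<in>A. X i \<omega>) (erlang_density (m * card A - 1) (real m / \<Omega>))"
proof -
  have "distributed M lborel (\<lambda>\<omega>. \<Sum>i\<in>A. X i \<omega>)
          (erlang_density ((\<Sum>i\<in>A. Suc (m - 1)) - 1) (real m / \<Omega>))"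
    using assms by (intro erlang_distributed_sum distributed_gamma_pdf_erlang) auto
  moreover have "(\<Sum>i\<in>A. Suc (m - 1)) = m * card A"
    using assms(4) by simp
  ultimately show ?thesis by simp
qed

lemma (in prob_space) prob_erlang_gt:
  assumes "distributed M lborel X (erlang_density (a - 1) l)" "0 < a" "0 < l" "0 \<le> t"
  shows "prob {\<omega>\<in>space M. t < X \<omega>} = exp (-l*t) * (\<Sum>\<mu><a. (l*t)^\<mu> / fact \<mu>)"
proof -
  have "prob {\<omega>\<in>space M. t < X \<omega>} = (\<Sum>\<mu>\<le>a - 1. (l*t)^\<mu> * exp (-l*t) / fact \<mu>)"
    using erlang_distributed_gt[OF assms(1,3,4)] assms(4) by (simp add: erlang_CDF_def)
  also have "{..a - 1} = {..<a}" using assms(2) by auto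
  finally show ?thesis by (simp add: sum_distrib_left field_simps)
qed

lemma (in prob_space) AE_erlang_pos:
  assumes "distributed M lborel X (erlang_density k l)" "0 < l"
  shows "AE \<omega> in M. 0 < X \<omega>"
proof (rule AE_I)
  have [measurable]: "X \<in> borel_measurable M" using distributed_measurable[OF assms(1)] by simp
  show "{\<omega> \<in> space M. \<not> 0 < X \<omega>} \<subseteq> {\<omega> \<in> space M. X \<omega> \<le> 0}" by auto
  show "{\<omega> \<in> space M. X \<omega> \<le> 0} \<in> events" by measurable
  show "emeasure M {\<omega> \<in> space M. X \<omega> \<le> 0} = 0"
    using erlang_distributed_le[OF assms, of 0] by (simp add: emeasure_eq_measure erlang_CDF_at0)
qed

lemma (in prob_space) indep_var_sum_disjoint:
  fixes X :: "'i \<Rightarrow> 'a \<Rightarrow> real"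
  assumes "indep_vars (\<lambda>_. borel) X I" "A \<inter> B = {}" "A \<subseteq> I" "B \<subseteq> I"
  shows "indep_var borel (\<lambda>\<omega>. \<Sum>i\<in>A. X i \<omega>) borel (\<lambda>\<omega>. \<Sum>i\<in>B. X i \<omega>)"
proof -
  have "(\<lambda>f :: 'i \<Rightarrow> real. \<Sum>i\<in>J. f i) \<in> borel_measurable (PiM J (\<lambda>_. borel))" for J
    by (rule borel_measurable_sum, rule measurable_component_singleton)
  from indep_var_compose[OF indep_var_restrict[OF assms] this this]
  show ?thesis by (simp add: comp_def cong: sum.cong)
qed

lemma (in prob_space) prob_min_gt_indep:
  fixes X Y :: "'a \<Rightarrow> real"
  assumes "indep_var borel X borel Y"
  shows "prob {\<omega>\<in>space M. t < min (X \<omega>) (Y \<omega>)}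
       = prob {\<omega>\<in>space M. t < X \<omega>} * prob {\<omega>\<in>space M. t < Y \<omega>}"
proof -
  have "prob ((\<lambda>\<omega>. (X \<omega>, Y \<omega>)) -` ({t<..} \<times> {t<..}) \<inter> space M)
      = prob (X -` {t<..} \<inter> space M) * prob (Y -` {t<..} \<inter> space M)"
    by (rule indep_varD[OF assms]) (auto intro!: borel_open)
  moreover have "(\<lambda>\<omega>. (X \<omega>, Y \<omega>)) -` ({t<..} \<times> {t<..}) \<inter> space M = {\<omega>\<in>space M. t < min (X \<omega>) (Y \<omega>)}"
    by auto
  ultimately show ?thesis by (simp add: vimage_def Int_def conj_commute)
qed

lemma (in prob_space) prob_min_erlang_gt:
  assumes "indep_var borel X borel Y"
    and "distributed M lborel X (erlang_density (a - 1) l\<^sub>1)" "0 < a" "0 < l\<^sub>1"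
    and "distributed M lborel Y (erlang_density (b - 1) l\<^sub>2)" "0 < b" "0 < l\<^sub>2"
    and "0 \<le> t"
  shows "prob {\<omega>\<in>space M. t < min (X \<omega>) (Y \<omega>)}
       = (\<Sum>\<mu><a. \<Sum>\<nu><b. l\<^sub>1^\<mu> * l\<^sub>2^\<nu> / (fact \<mu> * fact \<nu>) * (t^(\<mu>+\<nu>) * exp (-(l\<^sub>1+l\<^sub>2)*t)))"
proof -
  have "prob {\<omega>\<in>space M. t < min (X \<omega>) (Y \<omega>)}
      = exp (-(l\<^sub>1+l\<^sub>2)*t) * ((\<Sum>\<mu><a. (l\<^sub>1*t)^\<mu> / fact \<mu>) * (\<Sum>\<nu><b. (l\<^sub>2*t)^\<nu> / fact \<nu>))"
    using prob_min_gt_indep[OF assms(1)] prob_erlang_gt[OF assms(2-4,8)] prob_erlang_gt[OF assms(5-8)]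
    by (simp add: algebra_simps exp_add[symmetric])
  also have "\<dots> = (\<Sum>\<mu><a. \<Sum>\<nu><b. exp (-(l\<^sub>1+l\<^sub>2)*t) * ((l\<^sub>1*t)^\<mu> / fact \<mu> * ((l\<^sub>2*t)^\<nu> / fact \<nu>)))"
    unfolding sum_product by (simp only: sum_distrib_left)
  also have "\<dots> = (\<Sum>\<mu><a. \<Sum>\<nu><b. l\<^sub>1^\<mu> * l\<^sub>2^\<nu> / (fact \<mu> * fact \<nu>) * (t^(\<mu>+\<nu>) * exp (-(l\<^sub>1+l\<^sub>2)*t)))"
    by (simp add: power_mult_distrib power_add mult_ac)
  finally show ?thesis .
qed

lemma nn_integral_FTC_Ioo:
  fixes f F :: "real \<Rightarrow> real"
  assumes [measurable]: "f \<in> borel_measurable borel"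
    and "\<And>x. x \<in> {a..b} \<Longrightarrow> DERIV F x :> f x" "\<And>x. x \<in> {a..b} \<Longrightarrow> 0 \<le> f x" "a \<le> b"
  shows "(\<integral>\<^sup>+x. ennreal (f x) * indicator {a<..<b} x \<partial>lborel) = ennreal (F b - F a)"
proof -
  have "(\<integral>\<^sup>+x. ennreal (f x) * indicator {a<..<b} x \<partial>lborel)
      = (\<integral>\<^sup>+x. ennreal (f x) * indicator {a..b} x \<partial>lborel)"
    using AE_lborel_singleton[of a] AE_lborel_singleton[of b]
    by (intro nn_integral_cong_AE, eventually_elim) (auto split: split_indicator)
  also have "\<dots> = ennreal (F b - F a)"
    by (rule nn_integral_FTC_Icc) (use assms in auto)
  finally show ?thesis .
qed

lemma (in prob_space) nn_integral_comp_eq_ccdf: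
  fixes F d :: "real \<Rightarrow> real"
  assumes X [measurable]: "X \<in> borel_measurable M" and pos: "AE \<omega> in M. 0 < X \<omega>"
    and d [measurable]: "d \<in> borel_measurable borel"
    and deriv: "\<And>t. 0 \<le> t \<Longrightarrow> DERIV F t :> d t" and d_nonneg: "\<And>t. 0 \<le> t \<Longrightarrow> 0 \<le> d t"
    and "F 0 = 0"
  shows "(\<integral>\<^sup>+\<omega>. ennreal (F (X \<omega>)) \<partial>M)
       = (\<integral>\<^sup>+t. ennreal (d t * indicator {0<..} t * prob {\<omega>\<in>space M. t < X \<omega>}) \<partial>lborel)"
proof -
  define f where "f \<omega> t = (if 0 < t \<and> t < X \<omega> then ennreal (d t) else 0)" for \<omega> t
  have "AE \<omega> in M. ennreal (F (X \<omega>)) = (\<integral>\<^sup>+t. f \<omega> t \<partial>lborel)"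
    using pos
  proof eventually_elim
    case (elim \<omega>)
    have "ennreal (F (X \<omega>)) = (\<integral>\<^sup>+t. ennreal (d t) * indicator {0<..<X \<omega>} t \<partial>lborel)"
      using elim deriv d_nonneg \<open>F 0 = 0\<close> by (subst nn_integral_FTC_Ioo[where F=F]) auto
    also have "\<dots> = (\<integral>\<^sup>+t. f \<omega> t \<partial>lborel)"
      by (intro nn_integral_cong) (simp add: f_def split: split_indicator)
    finally show ?case .
  qed
  then have "(\<integral>\<^sup>+\<omega>. ennreal (F (X \<omega>)) \<partial>M) = (\<integral>\<^sup>+\<omega>. (\<integral>\<^sup>+t. f \<omega> t \<partial>lborel) \<partial>M)"
    by (rule nn_integral_cong_AE)
  also have "\<dots> = (\<integral>\<^sup>+t. (\<integral>\<^sup>+\<omega>. f \<omega> t \<partial>M) \<partial>lborel)"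
  proof -
    interpret pair_sigma_finite M "lborel :: real measure" ..
    show ?thesis by (rule Fubini'[symmetric]) (unfold f_def, measurable)
  qed
  also have "\<dots> = (\<integral>\<^sup>+t. ennreal (d t * indicator {0<..} t * prob {\<omega>\<in>space M. t < X \<omega>}) \<partial>lborel)"
  proof (intro nn_integral_cong)
    fix t :: real
    have "(\<integral>\<^sup>+\<omega>. f \<omega> t \<partial>M) = (\<integral>\<^sup>+\<omega>. ennreal (d t * indicator {0<..} t) * indicator {\<omega>\<in>space M. t < X \<omega>} \<omega> \<partial>M)"
      by (intro nn_integral_cong) (auto simp: f_def split: split_indicator)
    also have "\<dots> = ennreal (d t * indicator {0<..} t) * emeasure M {\<omega>\<in>space M. t < X \<omega>}"
      by (rule nn_integral_cmult_indicator) measurable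
    finally show "(\<integral>\<^sup>+\<omega>. f \<omega> t \<partial>M) = ennreal (d t * indicator {0<..} t * prob {\<omega>\<in>space M. t < X \<omega>})"
      using d_nonneg[of t] by (auto simp: emeasure_eq_measure ennreal_mult' split: split_indicator)
  qed
  finally show ?thesis .
qed

lemma (in prob_space) has_bochner_integral_ln_one_plus:
  assumes [measurable]: "X \<in> borel_measurable M" and pos: "AE \<omega> in M. 0 < X \<omega>" and c: "0 < c"
    and I: "has_bochner_integral lborel
              (\<lambda>t. c / (1 + c*t) * indicator {0<..} t * prob {\<omega>\<in>space M. t < X \<omega>}) I"
  shows "has_bochner_integral M (\<lambda>\<omega>. ln (1 + c * X \<omega>)) I"
proof (rule has_bochner_integral_nn_integral)
  have nonneg: "0 \<le> c / (1 + c*t) * indicator {0<..} t * prob {\<omega>\<in>space M. t < X \<omega>}" for t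
    using c by (simp split: split_indicator)
  show "AE \<omega> in M. 0 \<le> ln (1 + c * X \<omega>)"
    using pos by eventually_elim (use c in simp)
  show "0 \<le> I"
    unfolding has_bochner_integral_integral_eq[OF I, symmetric]
    by (rule Bochner_Integration.integral_nonneg) (rule nonneg)
  have "(\<integral>\<^sup>+\<omega>. ennreal (ln (1 + c * X \<omega>)) \<partial>M)
      = (\<integral>\<^sup>+t. ennreal (c / (1 + c*t) * indicator {0<..} t * prob {\<omega>\<in>space M. t < X \<omega>}) \<partial>lborel)"
  proof (rule nn_integral_comp_eq_ccdf[OF _ pos])
    fix t :: real
    assume "0 \<le> t"
    then have "0 < 1 + c*t" using c by (simp add: add_pos_nonneg)
    then show "DERIV (\<lambda>t. ln (1 + c*t)) t :> c / (1 + c*t)"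
      by (auto intro!: derivative_eq_intros)
    show "0 \<le> c / (1 + c*t)" using \<open>0 < 1 + c*t\<close> c by simp
  qed simp_all
  also have "\<dots> = ennreal I"
    using I nonneg by (simp add: has_bochner_integral_iff nn_integral_eq_integral)
  finally show "(\<integral>\<^sup>+\<omega>. ennreal (ln (1 + c * X \<omega>)) \<partial>M) = ennreal I" .
qed measurable

lemma (in prob_space) has_bochner_integral_ln_one_plus_min_erlang:
  assumes ind: "indep_var borel X borel Y"
    and DX: "distributed M lborel X (erlang_density (a - 1) l\<^sub>1)" and a: "0 < a" and l\<^sub>1: "0 < l\<^sub>1"
    and DY: "distributed M lborel Y (erlang_density (b - 1) l\<^sub>2)" and b: "0 < b" and l\<^sub>2: "0 < l\<^sub>2"
    and c: "0 < c"
  shows "has_bochner_integral M (\<lambda>\<omega>. ln (1 + c * min (X \<omega>) (Y \<omega>)))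
           (\<Sum>\<mu><a. \<Sum>\<nu><b. l\<^sub>1^\<mu> * l\<^sub>2^\<nu> / (fact \<mu> * fact \<nu>)
              * (fact (\<mu>+\<nu>) / c^(\<mu>+\<nu>) * exp ((l\<^sub>1+l\<^sub>2)/c) * upper_Gamma (- real (\<mu>+\<nu>)) ((l\<^sub>1+l\<^sub>2)/c)))"
proof (rule has_bochner_integral_ln_one_plus[OF _ _ c])
  have [measurable]: "X \<in> borel_measurable M" "Y \<in> borel_measurable M"
    using DX DY by (auto dest: distributed_measurable)
  show "(\<lambda>\<omega>. min (X \<omega>) (Y \<omega>)) \<in> borel_measurable M" by measurable
  show "AE \<omega> in M. 0 < min (X \<omega>) (Y \<omega>)"
    using AE_erlang_pos[OF DX l\<^sub>1] AE_erlang_pos[OF DY l\<^sub>2] by eventually_elim simp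
  let ?w = "\<lambda>\<mu> \<nu>. l\<^sub>1^\<mu> * l\<^sub>2^\<nu> / (fact \<mu> * fact \<nu>)"
  have "c / (1 + c*t) * indicator {0<..} t * prob {\<omega>\<in>space M. t < min (X \<omega>) (Y \<omega>)}
      = (\<Sum>\<mu><a. \<Sum>\<nu><b. ?w \<mu> \<nu> * log_moment_kernel (l\<^sub>1+l\<^sub>2) c (\<mu>+\<nu>) t)" for t
  proof (cases "0 < t")
    case True
    then show ?thesis
      using prob_min_erlang_gt[OF ind DX a l\<^sub>1 DY b l\<^sub>2, of t]
      by (simp add: log_moment_kernel_def sum_distrib_left field_simps)
  qed (simp add: log_moment_kernel_def)
  moreover have "has_bochner_integral lborel
      (\<lambda>t. \<Sum>\<mu><a. \<Sum>\<nu><b. ?w \<mu> \<nu> * log_moment_kernel (l\<^sub>1+l\<^sub>2) c (\<mu>+\<nu>) t)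
      (\<Sum>\<mu><a. \<Sum>\<nu><b. ?w \<mu> \<nu>
         * (fact (\<mu>+\<nu>) / c^(\<mu>+\<nu>) * exp ((l\<^sub>1+l\<^sub>2)/c) * upper_Gamma (- real (\<mu>+\<nu>)) ((l\<^sub>1+l\<^sub>2)/c)))"
    using c l\<^sub>1 l\<^sub>2
    by (intro has_bochner_integral_sum has_bochner_integral_mult_right has_bochner_integral_log_moment_kernel) auto
  ultimately show "has_bochner_integral lborel
      (\<lambda>t. c / (1 + c*t) * indicator {0<..} t * prob {\<omega>\<in>space M. t < min (X \<omega>) (Y \<omega>)})
      (\<Sum>\<mu><a. \<Sum>\<nu><b. ?w \<mu> \<nu>
         * (fact (\<mu>+\<nu>) / c^(\<mu>+\<nu>) * exp ((l\<^sub>1+l\<^sub>2)/c) * upper_Gamma (- real (\<mu>+\<nu>)) ((l\<^sub>1+l\<^sub>2)/c)))"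
    by simp
qed

lemma (in prob_space) expectation_log_ratio_min_erlang:
  assumes ind: "indep_var borel X borel Y"
    and DX: "distributed M lborel X (erlang_density (p - 1) l\<^sub>1)" "0 < p" "0 < l\<^sub>1"
    and DY: "distributed M lborel Y (erlang_density (q - 1) l\<^sub>2)" "0 < q" "0 < l\<^sub>2"
    and c: "0 < c" and a: "0 < a"
  shows "expectation (\<lambda>\<omega>. log 2 (1 + c * min (X \<omega>) (Y \<omega>)) - log 2 (1 + a * c * min (X \<omega>) (Y \<omega>)))
       = 1 / ln 2 * (\<Sum>\<mu><p. \<Sum>\<nu><q. l\<^sub>1^\<mu> * l\<^sub>2^\<nu> * fact (\<mu>+\<nu>) / (fact \<mu> * fact \<nu> * c^(\<mu>+\<nu>))
           * (exp ((l\<^sub>1+l\<^sub>2)/c) * upper_Gamma (- real (\<mu>+\<nu>)) ((l\<^sub>1+l\<^sub>2)/c)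
              - 1 / a^(\<mu>+\<nu>) * exp ((l\<^sub>1+l\<^sub>2)/(c*a)) * upper_Gamma (- real (\<mu>+\<nu>)) ((l\<^sub>1+l\<^sub>2)/(c*a))))"
proof -
  define S where "S c = (\<Sum>\<mu><p. \<Sum>\<nu><q. l\<^sub>1^\<mu> * l\<^sub>2^\<nu> / (fact \<mu> * fact \<nu>)
      * (fact (\<mu>+\<nu>) / c^(\<mu>+\<nu>) * exp ((l\<^sub>1+l\<^sub>2)/c) * upper_Gamma (- real (\<mu>+\<nu>)) ((l\<^sub>1+l\<^sub>2)/c)))" for c
  have "has_bochner_integral M
      (\<lambda>\<omega>. log 2 (1 + c * min (X \<omega>) (Y \<omega>)) - log 2 (1 + a * c * min (X \<omega>) (Y \<omega>))) ((S c - S (a * c)) / ln 2)"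
    unfolding log_def diff_divide_distrib[symmetric] S_def using c a
    by (intro has_bochner_integral_divide_zero has_bochner_integral_diff
        has_bochner_integral_ln_one_plus_min_erlang[OF ind DX DY]) auto
  moreover have "S c - S (a * c) = (\<Sum>\<mu><p. \<Sum>\<nu><q. l\<^sub>1^\<mu> * l\<^sub>2^\<nu> * fact (\<mu>+\<nu>) / (fact \<mu> * fact \<nu> * c^(\<mu>+\<nu>))
           * (exp ((l\<^sub>1+l\<^sub>2)/c) * upper_Gamma (- real (\<mu>+\<nu>)) ((l\<^sub>1+l\<^sub>2)/c)
              - 1 / a^(\<mu>+\<nu>) * exp ((l\<^sub>1+l\<^sub>2)/(c*a)) * upper_Gamma (- real (\<mu>+\<nu>)) ((l\<^sub>1+l\<^sub>2)/(c*a))))"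
    unfolding S_def sum_subtractf[symmetric] using c a
    by (intro sum.cong refl) (simp add: field_simps power_mult_distrib)
  ultimately show ?thesis
    by (simp add: has_bochner_integral_iff)
qed

theorem theorem2:
  fixes M :: "'a measure" and G :: "gidx \<Rightarrow> 'a \<Rightarrow> real"
    and N_r N_d m_sr m_sd m_rd :: nat
    and \<Omega>_sr \<Omega>_sd \<Omega>_rd \<rho> a\<^sub>1 a\<^sub>2 :: real
  assumes "prob_space M"
    and "N_r > 0" "N_d > 0" "m_sr > 0" "m_sd > 0" "m_rd > 0"
    and "\<Omega>_sr > 0" "\<Omega>_sd > 0" "\<Omega>_rd > 0" "\<rho> > 0"
    and "0 < a\<^sub>1" "a\<^sub>1 < 1" "0 < a\<^sub>2" "a\<^sub>2 < 1" "a\<^sub>1 + a\<^sub>2 = 1" "a\<^sub>1 > a\<^sub>2"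
    and indep: "prob_space.indep_vars M (\<lambda>_. borel) G
                  (SR ` {..<N_r} \<union> SD ` {..<N_d} \<union> RD ` {..<N_d})"
    and dist_sr: "\<And>i. i < N_r \<Longrightarrow>
          distributed M lborel (G (SR i)) (\<lambda>x. ennreal (gamma_pdf (real m_sr) \<Omega>_sr x))"
    and dist_sd: "\<And>j. j < N_d \<Longrightarrow>
          distributed M lborel (G (SD j)) (\<lambda>x. ennreal (gamma_pdf (real m_sd) \<Omega>_sd x))"
    and dist_rd: "\<And>k. k < N_d \<Longrightarrow>
          distributed M lborel (G (RD k)) (\<lambda>x. ennreal (gamma_pdf (real m_rd) \<Omega>_rd x))"
  shows "(let g_sr = (\<lambda>\<omega>. \<Sum>i<N_r. G (SR i) \<omega>);
              g_sd = (\<lambda>\<omega>. \<Sum>j<N_d. G (SD j) \<omega>);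
              X = (\<lambda>\<omega>. min (g_sr \<omega>) (g_sd \<omega>));
              \<Phi> = real m_sr / \<Omega>_sr + real m_sd / \<Omega>_sd
          in (1/2) * prob_space.expectation M
                       (\<lambda>\<omega>. log 2 (1 + \<rho> * X \<omega>) - log 2 (1 + a\<^sub>2 * \<rho> * X \<omega>))
             = 1 / (2 * ln 2) *
               (\<Sum>\<mu><m_sr * N_r. \<Sum>\<nu><m_sd * N_d.
                  (real m_sr ^ \<mu> * real m_sd ^ \<nu> * Gamma (real (\<mu> + \<nu> + 1)))
                  / (\<Omega>_sr ^ \<mu> * \<Omega>_sd ^ \<nu> * fact \<mu> * fact \<nu> * \<rho> ^ (\<mu> + \<nu>))
                  * (exp (\<Phi> / \<rho>) * upper_Gamma (- real (\<mu> + \<nu>)) (\<Phi> / \<rho>)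
                     - 1 / a\<^sub>2 ^ (\<mu> + \<nu>) * exp (\<Phi> / (\<rho> * a\<^sub>2))
                         * upper_Gamma (- real (\<mu> + \<nu>)) (\<Phi> / (\<rho> * a\<^sub>2)))))"
proof -
  interpret prob_space M by fact
  have pos: "0 < N_r" "0 < N_d" "0 < m_sr" "0 < m_sd" "0 < \<Omega>_sr" "0 < \<Omega>_sd" "0 < \<rho>" "0 < a\<^sub>2"
    using assms by auto
  have sum_SR: "(\<lambda>\<omega>. \<Sum>i<N_r. G (SR i) \<omega>) = (\<lambda>\<omega>. \<Sum>i\<in>SR ` {..<N_r}. G i \<omega>)"
    and sum_SD: "(\<lambda>\<omega>. \<Sum>j<N_d. G (SD j) \<omega>) = (\<lambda>\<omega>. \<Sum>i\<in>SD ` {..<N_d}. G i \<omega>)"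
    by (simp_all add: sum.reindex inj_on_def)
  have D_sr: "distributed M lborel (\<lambda>\<omega>. \<Sum>i<N_r. G (SR i) \<omega>) (erlang_density (m_sr * N_r - 1) (real m_sr / \<Omega>_sr))"
    unfolding sum_SR
    using distributed_sum_gamma_pdf[OF indep_vars_subset[OF indep], of "SR ` {..<N_r}" m_sr \<Omega>_sr] pos dist_sr
    by (auto simp: card_image inj_on_def)
  have D_sd: "distributed M lborel (\<lambda>\<omega>. \<Sum>j<N_d. G (SD j) \<omega>) (erlang_density (m_sd * N_d - 1) (real m_sd / \<Omega>_sd))"
    unfolding sum_SD
    using distributed_sum_gamma_pdf[OF indep_vars_subset[OF indep], of "SD ` {..<N_d}" m_sd \<Omega>_sd] pos dist_sd
    by (auto simp: card_image inj_on_def)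
  have indep_sr_sd: "indep_var borel (\<lambda>\<omega>. \<Sum>i<N_r. G (SR i) \<omega>) borel (\<lambda>\<omega>. \<Sum>j<N_d. G (SD j) \<omega>)"
    unfolding sum_SR sum_SD by (rule indep_var_sum_disjoint[OF indep]) auto
  have coefficient: "(real m_sr / \<Omega>_sr)^\<mu> * (real m_sd / \<Omega>_sd)^\<nu> * fact (\<mu>+\<nu>) / (fact \<mu> * fact \<nu> * \<rho>^(\<mu>+\<nu>))
      = real m_sr ^ \<mu> * real m_sd ^ \<nu> * Gamma (real (\<mu> + \<nu> + 1))
        / (\<Omega>_sr ^ \<mu> * \<Omega>_sd ^ \<nu> * fact \<mu> * fact \<nu> * \<rho> ^ (\<mu> + \<nu>))" for \<mu> \<nu>
    using Gamma_fact[of "\<mu> + \<nu>", where 'a=real] by (simp add: power_divide field_simps)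
  show ?thesis
    unfolding Let_def coefficient[symmetric]
    using expectation_log_ratio_min_erlang[OF indep_sr_sd D_sr _ _ D_sd] pos by simp
qed

end
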